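(* Let $\mathcal{O}$ be a small category, let $n\ge 0$, and let $\sigma\colon\Delta[n]\to N\mathcal{O}$ correspond to the sequence $\sigma_0\xrightarrow{g_1}\sigma_1\to\cdots\xrightarrow{g_n}\sigma_n$ in $\mathcal{O}$. Let $A\subset\Delta[n]$ be a simplicial subset containing the face opposite the vertex $0$, and let $\lambda$ be the composite $A\hookrightarrow\Delta[n]\xrightarrow{\sigma}N\mathcal{O}$. Then the square of contravariant functors $\mathcal{O}\to\mathcal{S}$ $$\begin{array}{ccc}\mathcal{O}(-,\sigma_0)\times A & \longrightarrow & F\lambda\\ \downarrow & & \downarrow\\ \mathcal{O}(-,\sigma_0)\times\Delta[n] & \xrightarrow{\iota_n} & F\sigma\end{array}$$ is a pushout, where the top map is the restriction of $\iota_n$, the left map is induced by the inclusion $A\subset\Delta[n]$, and the right map is induced by the inclusion $A\subset \Delta[n]$ over $N\mathcal{O}$.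
   Context: $\mathcal{S}$ is the category of simplicial sets, $N$ the nerve, $\Delta[n]$ the standard $n$-simplex (nerve of the poset $[n]=\{0<\dots<n\}$), $\mathcal{O}(b,c)$ the hom-set of $\mathcal{O}$ and $\mathcal{O}(-,c)$ the representable contravariant set-valued functor (viewed as a discrete simplicial-set-valued functor). For $\phi\colon X\to N\mathcal{O}$ a simplicial set over $N\mathcal{O}$, $F\phi$ is the contravariant functor $\mathcal{O}\to\mathcal{S}$ with $(F\phi)(b)$ the pullback of $X\xrightarrow{\phi}N\mathcal{O}\leftarrow N(b{\downarrow}\mathcal{O})$ (where $b{\downarrow}\mathcal{O}$ is the category of objects under $b$ and the map is the forgetful one), functorial in $b$ via the functors $c{\downarrow}\mathcal{O}\to b{\downarrow}\mathcal{O}$ given by precomposition with $\beta\colon b\to c$. A $k$-simplex of $(F\sigma)(b)$ is thus a pair $(\alpha,\omega)$ with $\alpha\colon[k]\to[n]$ order-preserving and $\omega=(b\to\sigma\alpha(0)\to\sigma\alpha(1)\to\cdots\to\sigma\alpha(k))$ a $k$-simplex of $N(b{\downarrow}\mathcal{O})$ whose maps after the first are $\sigma\alpha(i-1\to i)$. The map $\iota_n\colon\mathcal{O}(-,\sigma_0)\times\Delta[n]\to F\sigma$ sends $(g,\alpha)\in\mathcal{O}(b,\sigma_0)\times\Delta[n]_k$ to $(\alpha,\omega)$ with $\omega=(b\xrightarrow{\sigma(0\to\alpha(0))\circ g}\sigma\alpha(0)\xrightarrow{\sigma\alpha(0\to1)}\cdots\xrightarrow{\sigma\alpha(k-1\to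 k)}\sigma\alpha(k))$. *)

theory Defs
  imports Main
begin

record ('o, 'm) category =
  Ob  :: "'o set"
  Ar  :: "'m set"
  Dom :: "'m \<Rightarrow> 'o"
  Cod :: "'m \<Rightarrow> 'o"
  Comp :: "'m \<Rightarrow> 'm \<Rightarrow> 'm"   (* Comp C g f = g o f *)
  Idm :: "'o \<Rightarrow> 'm"

definition hom :: "('o, 'm) category \<Rightarrow> 'o \<Rightarrow> 'o \<Rightarrow> 'm set" where
  "hom C b c = {f \<in> Ar C. Dom C f = b \<and> Cod C f = c}"

definition is_category :: "('o, 'm) category \<Rightarrow> bool" where
  "is_category C \<longleftrightarrow>
     (\<forall>f\<in>Ar C. Dom C f \<in> Ob C \<and> Cod C f \<in> Ob C) \<and>
     (\<forall>c\<in>Ob C. Idm C c \<in> hom C c c) \<and>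
     (\<forall>f\<in>Ar C. \<forall>g\<in>Ar C. Cod C f = Dom C g \<longrightarrow> Comp C g f \<in> hom C (Dom C f) (Cod C g)) \<and>
     (\<forall>f\<in>Ar C. Comp C (Idm C (Cod C f)) f = f \<and> Comp C f (Idm C (Dom C f)) = f) \<and>
     (\<forall>f\<in>Ar C. \<forall>g\<in>Ar C. \<forall>h\<in>Ar C. Cod C f = Dom C g \<and> Cod C g = Dom C h \<longrightarrow>
        Comp C h (Comp C g f) = Comp C (Comp C h g) f)"

text \<open>A k-simplex of Delta[n] (an order preserving map [k] -> [n]) is represented
  as the list of its values, of length k+1, sorted, entries at most n.\<close>

definition delta :: "nat \<Rightarrow> nat \<Rightarrow> nat list set" where
  "delta n k = {xs. length xs = Suc k \<and> sorted xs \<and> (\<forall>x\<in>set xs. x \<le> n)}"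

definition delta_all :: "nat \<Rightarrow> nat list set" where
  "delta_all n = (\<Union>k. delta n k)"

definition simplicial_subset :: "nat \<Rightarrow> nat list set \<Rightarrow> bool" where
  "simplicial_subset n A \<longleftrightarrow> A \<subseteq> delta_all n \<and>
     (\<forall>xs\<in>A. \<forall>m. \<forall>\<theta>\<in>delta (length xs - 1) m. map (\<lambda>i. xs ! i) \<theta> \<in> A)"

definition face0 :: "nat \<Rightarrow> nat list set" where
  "face0 n = {xs \<in> delta_all n. \<forall>x\<in>set xs. 1 \<le> x}"

text \<open>sigma(i -> j) for i <= j: the composite g_j o ... o g_(i+1) (identity if i = j).\<close>
fun chain :: "('o, 'm) category \<Rightarrow> (nat \<Rightarrow> 'o) \<Rightarrow> (nat \<Rightarrow> 'm) \<Rightarrow> nat \<Rightarrow> nat \<Rightarrow> 'm" where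
  "chain C s g i 0 = Idm C (s i)"
| "chain C s g i (Suc j) =
     (if Suc j \<le> i then Idm C (s i) else Comp C (g (Suc j)) (chain C s g i j))"

text \<open>k-simplices of (F phi)(b), for phi the composite S \<subseteq> Delta[n] -> N O given by sigma:
  pairs (alpha, omega) with alpha a k-simplex of S and omega the k-simplex
  b -> sigma alpha(0) -> ... -> sigma alpha(k) of N(b under O), encoded as the list
  of its k+1 morphisms.\<close>
definition Fset :: "('o, 'm) category \<Rightarrow> (nat \<Rightarrow> 'o) \<Rightarrow> (nat \<Rightarrow> 'm) \<Rightarrow> nat list set
    \<Rightarrow> 'o \<Rightarrow> nat \<Rightarrow> (nat list \<times> 'm list) set" where
  "Fset C s g S b k = {(\<alpha>, \<omega>). \<alpha> \<in> S \<and> length \<alpha> = Suc k \<and> length \<omega> = Suc k \<and>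
      \<omega> ! 0 \<in> hom C b (s (\<alpha> ! 0)) \<and>
      (\<forall>i. 1 \<le> i \<and> i \<le> k \<longrightarrow> \<omega> ! i = chain C s g (\<alpha> ! (i - 1)) (\<alpha> ! i))}"

definition iota :: "('o, 'm) category \<Rightarrow> (nat \<Rightarrow> 'o) \<Rightarrow> (nat \<Rightarrow> 'm)
    \<Rightarrow> 'm \<times> nat list \<Rightarrow> nat list \<times> 'm list" where
  "iota C s g p = (case p of (h, \<alpha>) \<Rightarrow>
     (\<alpha>, Comp C (chain C s g 0 (\<alpha> ! 0)) h #
          map (\<lambda>i. chain C s g (\<alpha> ! (i - 1)) (\<alpha> ! i)) [1..<length \<alpha>]))"

text \<open>The square P --f2--> R, P --f1--> Q, Q --g1--> T, R --g2--> T is a pushout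
  in the category of sets: maps are well-typed, it commutes, and it has the universal
  property against every set Z (of an arbitrary type 'z).\<close>
definition is_pushout_set :: "'z itself \<Rightarrow> 'p set \<Rightarrow> 'q set \<Rightarrow> 'r set \<Rightarrow> 't set
    \<Rightarrow> ('p \<Rightarrow> 'q) \<Rightarrow> ('p \<Rightarrow> 'r) \<Rightarrow> ('q \<Rightarrow> 't) \<Rightarrow> ('r \<Rightarrow> 't) \<Rightarrow> bool" where
  "is_pushout_set _ P Q R T f1 f2 g1 g2 \<longleftrightarrow>
     (\<forall>x\<in>P. f1 x \<in> Q \<and> f2 x \<in> R) \<and> (\<forall>y\<in>Q. g1 y \<in> T) \<and> (\<forall>y\<in>R. g2 y \<in> T) \<and>
     (\<forall>x\<in>P. g1 (f1 x) = g2 (f2 x)) \<and>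
     (\<forall>(Z::'z set) u v. (\<forall>y\<in>Q. u y \<in> Z) \<and> (\<forall>y\<in>R. v y \<in> Z) \<and> (\<forall>x\<in>P. u (f1 x) = v (f2 x))
        \<longrightarrow> (\<exists>w. (\<forall>t\<in>T. w t \<in> Z) \<and> (\<forall>y\<in>Q. w (g1 y) = u y) \<and> (\<forall>y\<in>R. w (g2 y) = v y) \<and>
               (\<forall>w'. (\<forall>y\<in>Q. w' (g1 y) = u y) \<and> (\<forall>y\<in>R. w' (g2 y) = v y)
                      \<longrightarrow> (\<forall>t\<in>T. w' t = w t))))"

end

theory Submission
  imports Defs
begin

text \<open>The left and right maps of the square are inclusions, so it suffices that \<open>\<iota>\<^sub>n\<close> maps
  the complement of \<open>\<O>(-,\<sigma>\<^sub>0) \<times> A\<close> bijectively onto the complement of \<open>F\<lambda>\<close> in \<open>F\<sigma>\<close>.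
  A simplex \<open>\<alpha>\<close> of \<open>\<Delta>[n]\<close> outside \<open>A\<close> is not in the face opposite \<open>0\<close>, so \<open>\<alpha>(0) = 0\<close>
  because \<open>\<alpha>\<close> is monotone. Then \<open>\<sigma>(0 \<rightarrow> \<alpha>(0))\<close> is an identity, all arrows of
  \<open>\<iota>\<^sub>n(h, \<alpha>)\<close> after the first are determined by \<open>\<alpha>\<close>, and the first one is \<open>h\<close>:
  hence \<open>(\<alpha>, \<omega>) \<mapsto> (\<omega>\<^sub>0, \<alpha>)\<close> inverts \<open>\<iota>\<^sub>n\<close> there.\<close>

lemma is_pushout_set_inclusions:
  assumes "P \<subseteq> Q" and "R \<subseteq> T" and "f ` P \<subseteq> R" and bij: "bij_betw f (Q - P) (T - R)"
  shows "is_pushout_set TYPE('z) P Q R T (\<lambda>x. x) f f (\<lambda>x. x)"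
  unfolding is_pushout_set_def
proof (intro conjI allI impI)
  have f_Q: "f y \<in> T" if "y \<in> Q" for y
    using that assms bij_betw_apply[OF bij, of y] by (cases "y \<in> P") auto
  then show "\<forall>y\<in>Q. f y \<in> T" by blast
  show "\<forall>x\<in>P. x \<in> Q \<and> f x \<in> R" "\<forall>y\<in>R. y \<in> T" "\<forall>x\<in>P. f x = f x"
    using assms by auto
next
  fix Z :: "'z set" and u v
  assume "(\<forall>y\<in>Q. u y \<in> Z) \<and> (\<forall>y\<in>R. v y \<in> Z) \<and> (\<forall>x\<in>P. u x = v (f x))"
  then have u: "\<And>y. y \<in> Q \<Longrightarrow> u y \<in> Z" and v: "\<And>y. y \<in> R \<Longrightarrow> v y \<in> Z"
    and uv: "\<And>x. x \<in> P \<Longrightarrow> u x = v (f x)" by auto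
  define f' where "f' = inv_into (Q - P) f"
  have f'_in: "f' t \<in> Q - P" if "t \<in> T - R" for t
    using that bij_betw_apply[OF bij_betw_inv_into[OF bij]] f'_def by simp
  have f_f': "f (f' t) = t" if "t \<in> T - R" for t
    using that bij bij_betw_inv_into_right f'_def by metis
  have f'_f: "f' (f y) = y" if "y \<in> Q - P" for y
    using that bij bij_betw_inv_into_left f'_def by metis
  define w where "w t = (if t \<in> R then v t else u (f' t))" for t
  have w_f: "w (f y) = u y" if "y \<in> Q" for y
  proof (cases "y \<in> P")
    case True
    then show ?thesis using assms(3) uv unfolding w_def by auto
  next
    case False
    then have "f y \<in> T - R" using that bij_betw_apply[OF bij] by blast
    then show ?thesis using False that f'_f unfolding w_def by auto
  qed
  show "\<exists>w. (\<forall>t\<in>T. w t \<in> Z) \<and> (\<forall>y\<in>Q. w (f y) = u y) \<and> (\<forall>y\<in>R. w y = v y) \<and>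
          (\<forall>w'. (\<forall>y\<in>Q. w' (f y) = u y) \<and> (\<forall>y\<in>R. w' y = v y) \<longrightarrow> (\<forall>t\<in>T. w' t = w t))"
  proof (intro exI conjI ballI allI impI)
    show "w t \<in> Z" if "t \<in> T" for t
      using that u v f'_in unfolding w_def by auto
    show "w (f y) = u y" if "y \<in> Q" for y
      using that w_f by blast
    show "w y = v y" if "y \<in> R" for y
      using that unfolding w_def by simp
    show "w' t = w t" if "(\<forall>y\<in>Q. w' (f y) = u y) \<and> (\<forall>y\<in>R. w' y = v y)" and "t \<in> T" for w' t
    proof (cases "t \<in> R")
      case True
      then show ?thesis using that unfolding w_def by simp
    next
      case False
      then have "t \<in> T - R" using that by blast
      then show ?thesis using that f'_in f_f' w_f by (metis DiffD1)
    qed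
  qed
qed

lemma Comp_in_hom:
  assumes "is_category C" "f \<in> hom C a b" "g \<in> hom C b c"
  shows "Comp C g f \<in> hom C a c"
  using assms unfolding is_category_def hom_def by force

lemma Comp_Idm_left:
  assumes "is_category C" "f \<in> hom C a b"
  shows "Comp C (Idm C b) f = f"
  using assms unfolding is_category_def hom_def by force

lemma chain_in_hom:
  assumes C: "is_category C"
    and s: "\<forall>i\<le>n. s i \<in> Ob C"
    and g: "\<forall>i. 1 \<le> i \<and> i \<le> n \<longrightarrow> g i \<in> hom C (s (i - 1)) (s i)"
  shows "i \<le> j \<Longrightarrow> j \<le> n \<Longrightarrow> chain C s g i j \<in> hom C (s i) (s j)"
proof (induction j)
  case 0
  then show ?case using C s unfolding is_category_def by auto
next
  case (Suc j)
  show ?case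
  proof (cases "Suc j \<le> i")
    case True
    then show ?thesis using C s Suc.prems unfolding is_category_def by auto
  next
    case False
    then have "chain C s g i j \<in> hom C (s i) (s j)" using Suc by simp
    moreover have "g (Suc j) \<in> hom C (s j) (s (Suc j))" using g Suc.prems by auto
    ultimately show ?thesis using False Comp_in_hom[OF C] by simp
  qed
qed

lemma fst_iota [simp]: "fst (iota C s g (h, \<alpha>)) = \<alpha>"
  unfolding iota_def by simp

lemma iota_in_Fset:
  assumes C: "is_category C"
    and s: "\<forall>i\<le>n. s i \<in> Ob C"
    and g: "\<forall>i. 1 \<le> i \<and> i \<le> n \<longrightarrow> g i \<in> hom C (s (i - 1)) (s i)"
    and h: "h \<in> hom C b (s 0)" and \<alpha>: "\<alpha> \<in> delta n k" "\<alpha> \<in> S"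
  shows "iota C s g (h, \<alpha>) \<in> Fset C s g S b k"
proof -
  have len: "length \<alpha> = Suc k" and "\<alpha> ! 0 \<le> n"
    using \<alpha>(1) unfolding delta_def by auto
  then have "chain C s g 0 (\<alpha> ! 0) \<in> hom C (s 0) (s (\<alpha> ! 0))"
    using chain_in_hom[OF C s g] by simp
  then have "Comp C (chain C s g 0 (\<alpha> ! 0)) h \<in> hom C b (s (\<alpha> ! 0))"
    using Comp_in_hom[OF C h] by blast
  then show ?thesis using len \<alpha>(2) unfolding Fset_def iota_def
    by (auto simp del: upt_Suc simp: nth_Cons')
qed

lemma iota_nth_0:
  assumes "is_category C" "h \<in> hom C b (s 0)" "\<alpha> ! 0 = 0"
  shows "snd (iota C s g (h, \<alpha>)) ! 0 = h"
  using assms Comp_Idm_left unfolding iota_def by simp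

lemma iota_Fset_inverse:
  assumes C: "is_category C"
    and t: "(\<alpha>, \<omega>) \<in> Fset C s g S b k" and \<alpha>0: "\<alpha> ! 0 = 0"
  shows "iota C s g (\<omega> ! 0, \<alpha>) = (\<alpha>, \<omega>)"
proof -
  have len: "length \<alpha> = Suc k" "length \<omega> = Suc k" and h: "\<omega> ! 0 \<in> hom C b (s 0)"
    and later: "\<And>i. 1 \<le> i \<Longrightarrow> i \<le> k \<Longrightarrow> \<omega> ! i = chain C s g (\<alpha> ! (i - 1)) (\<alpha> ! i)"
    using t \<alpha>0 unfolding Fset_def by auto
  have "snd (iota C s g (\<omega> ! 0, \<alpha>)) = \<omega>"
  proof (rule nth_equalityI)
    show "length (snd (iota C s g (\<omega> ! 0, \<alpha>))) = length \<omega>"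
      using len unfolding iota_def by (simp del: upt_Suc)
    fix i assume "i < length (snd (iota C s g (\<omega> ! 0, \<alpha>)))"
    then have "i < Suc k" using len unfolding iota_def by (simp del: upt_Suc)
    then show "snd (iota C s g (\<omega> ! 0, \<alpha>)) ! i = \<omega> ! i"
      using iota_nth_0[where s = s and g = g, OF C h \<alpha>0] len later[of i]
      by (cases i) (simp_all add: iota_def del: upt_Suc)
  qed
  then show ?thesis by (metis fst_iota prod.collapse)
qed

lemma nth_0_eq_0_if_notin_face0:
  assumes "\<alpha> \<in> delta n k" and "\<alpha> \<notin> face0 n"
  shows "\<alpha> ! 0 = 0"
proof -
  have "\<alpha> \<in> delta_all n" using assms(1) unfolding delta_all_def by auto
  then obtain j where j: "j < length \<alpha>" "\<alpha> ! j = 0"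
    using assms(2) unfolding face0_def by (auto simp: in_set_conv_nth not_less_eq_eq)
  moreover have "sorted \<alpha>" using assms(1) unfolding delta_def by simp
  ultimately show ?thesis using sorted_nth_mono[of \<alpha> 0 j] by simp
qed

lemma Fset_mono: "S \<subseteq> S' \<Longrightarrow> Fset C s g S b k \<subseteq> Fset C s g S' b k"
  unfolding Fset_def by auto

lemma Fset_Diff: "Fset C s g S b k - Fset C s g S' b k = {t \<in> Fset C s g S b k. fst t \<notin> S'}"
  unfolding Fset_def by auto

lemma mem_Fset_delta_all_Diff:
  assumes "face0 n \<subseteq> A" and t: "(\<alpha>, \<omega>) \<in> Fset C s g (delta_all n) b k - Fset C s g A b k"
  shows "\<alpha> \<in> delta n k - A" and "\<alpha> ! 0 = 0" and "\<omega> ! 0 \<in> hom C b (s 0)"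
proof -
  show "\<alpha> \<in> delta n k - A"
    using t unfolding Fset_Diff Fset_def delta_all_def delta_def by auto
  then show \<alpha>0: "\<alpha> ! 0 = 0"
    using assms(1) nth_0_eq_0_if_notin_face0 by blast
  show "\<omega> ! 0 \<in> hom C b (s 0)"
    using t \<alpha>0 unfolding Fset_def by auto
qed

lemma iota_bij_betw_Diff:
  assumes C: "is_category C"
    and s: "\<forall>i\<le>n. s i \<in> Ob C"
    and g: "\<forall>i. 1 \<le> i \<and> i \<le> n \<longrightarrow> g i \<in> hom C (s (i - 1)) (s i)"
    and face0: "face0 n \<subseteq> A"
  shows "bij_betw (iota C s g) (hom C b (s 0) \<times> (delta n k - A))
           (Fset C s g (delta_all n) b k - Fset C s g A b k)"
proof (rule bij_betw_byWitness[where f' = "\<lambda>t. (snd t ! 0, fst t)"])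
  note Diff = mem_Fset_delta_all_Diff[where C = C and s = s and g = g and b = b and k = k, OF face0]
  show "\<forall>y \<in> hom C b (s 0) \<times> (delta n k - A). (snd (iota C s g y) ! 0, fst (iota C s g y)) = y"
  proof
    fix y assume "y \<in> hom C b (s 0) \<times> (delta n k - A)"
    then obtain h \<alpha> where y: "y = (h, \<alpha>)" "h \<in> hom C b (s 0)" "\<alpha> \<in> delta n k" "\<alpha> \<notin> A"
      by blast
    have "\<alpha> ! 0 = 0" using y(3,4) face0 nth_0_eq_0_if_notin_face0 by blast
    then show "(snd (iota C s g y) ! 0, fst (iota C s g y)) = y"
      using y iota_nth_0[where s = s and g = g, OF C y(2)] by simp
  qed
  show "\<forall>t \<in> Fset C s g (delta_all n) b k - Fset C s g A b k. iota C s g (snd t ! 0, fst t) = t"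
  proof
    fix t assume t: "t \<in> Fset C s g (delta_all n) b k - Fset C s g A b k"
    obtain \<alpha> \<omega> where t_eq: "t = (\<alpha>, \<omega>)" by fastforce
    with t have mem: "(\<alpha>, \<omega>) \<in> Fset C s g (delta_all n) b k - Fset C s g A b k" by simp
    show "iota C s g (snd t ! 0, fst t) = t"
      using iota_Fset_inverse[OF C DiffD1[OF mem] Diff(2)[OF mem]] t_eq by simp
  qed
  show "iota C s g ` (hom C b (s 0) \<times> (delta n k - A))
          \<subseteq> Fset C s g (delta_all n) b k - Fset C s g A b k"
  proof (rule image_subsetI)
    fix y assume "y \<in> hom C b (s 0) \<times> (delta n k - A)"
    then obtain h \<alpha> where y: "y = (h, \<alpha>)" "h \<in> hom C b (s 0)" "\<alpha> \<in> delta n k" "\<alpha> \<notin> A"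
      by blast
    moreover have "\<alpha> \<in> delta_all n" using y(3) unfolding delta_all_def by blast
    ultimately show "iota C s g y \<in> Fset C s g (delta_all n) b k - Fset C s g A b k"
      using iota_in_Fset[OF C s g] unfolding Fset_Diff by simp
  qed
  show "(\<lambda>t. (snd t ! 0, fst t)) ` (Fset C s g (delta_all n) b k - Fset C s g A b k)
          \<subseteq> hom C b (s 0) \<times> (delta n k - A)"
    using Diff(1,3) by force
qed

theorem lemma2p2:
  fixes C :: "('o, 'm) category" and n :: nat
    and s :: "nat \<Rightarrow> 'o" and g :: "nat \<Rightarrow> 'm" and A :: "nat list set"
  assumes "is_category C"
    and "\<forall>i\<le>n. s i \<in> Ob C"
    and "\<forall>i. 1 \<le> i \<and> i \<le> n \<longrightarrow> g i \<in> hom C (s (i - 1)) (s i)"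
    and "simplicial_subset n A"
    and "face0 n \<subseteq> A"
  shows "\<forall>b\<in>Ob C. \<forall>k. is_pushout_set TYPE('z)
            (hom C b (s 0) \<times> (A \<inter> delta n k))
            (hom C b (s 0) \<times> delta n k)
            (Fset C s g A b k)
            (Fset C s g (delta_all n) b k)
            (\<lambda>x. x) (iota C s g) (iota C s g) (\<lambda>x. x)"
proof (intro ballI allI is_pushout_set_inclusions)
  fix b k
  show "hom C b (s 0) \<times> (A \<inter> delta n k) \<subseteq> hom C b (s 0) \<times> delta n k" by blast
  have "A \<subseteq> delta_all n" using assms(4) unfolding simplicial_subset_def by blast
  then show "Fset C s g A b k \<subseteq> Fset C s g (delta_all n) b k" by (rule Fset_mono)
  show "iota C s g ` (hom C b (s 0) \<times> (A \<inter> delta n k)) \<subseteq> Fset C s g A b k"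
    using iota_in_Fset[OF assms(1-3)] by blast
  have "hom C b (s 0) \<times> delta n k - hom C b (s 0) \<times> (A \<inter> delta n k)
          = hom C b (s 0) \<times> (delta n k - A)" by blast
  then show "bij_betw (iota C s g)
      (hom C b (s 0) \<times> delta n k - hom C b (s 0) \<times> (A \<inter> delta n k))
      (Fset C s g (delta_all n) b k - Fset C s g A b k)"
    using iota_bij_betw_Diff[OF assms(1-3,5)] by simp
qed

end
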